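(* Let $\beta_1,\dots,\beta_N>0$ and $u,v\in\mathbb R$ with $\beta_i+u>0$ and $\beta_i+v>0$ for all $i$. Then $\mathbb E^{\boldsymbol\beta,\boldsymbol\beta}_{\mathrm{LGRW}}\big[V(\mathbf L)\big]<\infty$, where $V(\mathbf L)=\big(\sum_{j=1}^Ne^{L_2(j)-L_1(j-1)}\big)^{-(u+v)}e^{-v(L_1(N)-L_2(N))}$.
   Context: Under $\mathbb P^{\boldsymbol\beta,\boldsymbol\beta}_{\mathrm{LGRW}}$, $\mathbf L_1=(L_1(j))_{0\le j\le N}$ and $\mathbf L_2=(L_2(j))_{0\le j\le N}$ are independent random walks with $L_1(0)=L_2(0)=0$ and independent increments $L_i(j)-L_i(j-1)\sim\log\Gamma^{-1}(\beta_j)$, i.e. with density $e^{-\beta_jy-e^{-y}}/\Gamma(\beta_j)$ on $\mathbb R$; $\mathbf L=(\mathbf L_1,\mathbf L_2)$. *)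

theory Defs
  imports "HOL-Probability.Probability"
begin

definition lgi_density :: "real \<Rightarrow> real \<Rightarrow> real" where
  "lgi_density b y = exp (- b * y - exp (- y)) / Gamma b"

definition incr_law :: "nat \<Rightarrow> (nat \<Rightarrow> real) \<Rightarrow> (nat \<Rightarrow> real) measure" where
  "incr_law N \<beta> = PiM {1..N} (\<lambda>j. density lborel (\<lambda>y. ennreal (lgi_density (\<beta> j) y)))"

text \<open>P^{beta,beta}_LGRW, realised as the law of the pair of increment sequences
  of the two independent walks L_1, L_2.\<close>
definition LGRW :: "nat \<Rightarrow> (nat \<Rightarrow> real) \<Rightarrow> ((nat \<Rightarrow> real) \<times> (nat \<Rightarrow> real)) measure" where
  "LGRW N \<beta> = incr_law N \<beta> \<Otimes>\<^sub>M incr_law N \<beta>"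

definition walk :: "(nat \<Rightarrow> real) \<Rightarrow> nat \<Rightarrow> real" where
  "walk x j = (\<Sum>i\<in>{1..j}. x i)"

definition V :: "nat \<Rightarrow> real \<Rightarrow> real \<Rightarrow> (nat \<Rightarrow> real) \<Rightarrow> (nat \<Rightarrow> real) \<Rightarrow> real" where
  "V N u v L1 L2 = (\<Sum>j\<in>{1..N}. exp (L2 j - L1 (j - 1))) powr (- (u + v))
                    * exp (- v * (L1 N - L2 N))"

end

theory Submission
  imports Defs "HOL-Real_Asymp.Real_Asymp"
begin

text \<open>Write \<open>V = S powr -(u+v) * exp (-v D)\<close> with \<open>S = \<Sum>j. exp (gap j)\<close>,
  \<open>gap j = L\<^sub>2(j) - L\<^sub>1(j-1)\<close> and \<open>D = L\<^sub>1(N) - L\<^sub>2(N)\<close>. The exponential of a linear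
  form \<open>\<Sum>k. a k * X k + b k * Y k\<close> in the increments \<open>X\<close>, \<open>Y\<close> of the two walks has finite
  expectation as soon as all \<open>a k, b k < \<beta> k\<close>, because \<open>E exp (c X) < \<infinity>\<close> for
  \<open>X \<sim> log \<Gamma>\<^sup>-\<^sup>1(\<beta>)\<close> and \<open>c < \<beta>\<close>. So it suffices to dominate \<open>V\<close> by such exponentials.
  If \<open>u + v > 0\<close>, then \<open>S \<ge> exp (gap 1), exp (gap N)\<close> gives
  \<open>S powr -(u+v) \<le> exp (-(u+v) ((1-t) gap 1 + t gap N))\<close> for every \<open>t \<in> [0,1]\<close>; the resulting
  coefficients are \<open>-v, (u+v) t - v, -u, v - (u+v) t\<close>, and \<open>t\<close> can be chosen to put all of them
  below \<open>\<beta>\<close>. If \<open>u + v \<le> 0\<close>, then \<open>S powr -(u+v) \<le> N powr -(u+v) * \<Sum>m. exp (-(u+v) gap m)\<close>,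
  and every summand has coefficients among \<open>-v, u, v, -u\<close>.\<close>

lemma nn_integral_exp_atLeast_0:
  fixes a C :: real
  assumes "0 < a" "0 \<le> C"
  shows "(\<integral>\<^sup>+y. ennreal (C * exp (- a * y)) * indicator {0..} y \<partial>lborel) = ennreal (C / a)"
proof -
  have "(\<integral>\<^sup>+y. ennreal (C * exp (- a * y)) * indicator {0..} y \<partial>lborel)
        = ennreal (0 - (- C * exp (- a * 0) / a))"
  proof (rule nn_integral_FTC_atLeast)
    show "((\<lambda>y. - C * exp (- a * y) / a) \<longlongrightarrow> 0) at_top"
      using assms by real_asymp
  qed (use assms in \<open>auto intro!: derivative_eq_intros\<close>)
  then show ?thesis by simp
qed

lemma nn_integral_lborel_split_at_0:
  fixes f :: "real \<Rightarrow> ennreal"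
  assumes [measurable]: "f \<in> borel_measurable borel"
  shows "(\<integral>\<^sup>+y. f y \<partial>lborel)
    = (\<integral>\<^sup>+y. f y * indicator {0..} y \<partial>lborel) + (\<integral>\<^sup>+y. f (- y) * indicator {0<..} y \<partial>lborel)"
proof -
  have "(\<integral>\<^sup>+y. f y \<partial>lborel)
      = (\<integral>\<^sup>+y. f y * indicator {0..} y \<partial>lborel) + (\<integral>\<^sup>+y. f y * indicator {..<0} y \<partial>lborel)"
    by (subst nn_integral_add[symmetric]) (auto intro!: nn_integral_cong split: split_indicator)
  also have "(\<integral>\<^sup>+y. f y * indicator {..<0} y \<partial>lborel)
      = (\<integral>\<^sup>+y. f y * indicator {..<0} y \<partial>distr lborel borel uminus)"
    by (simp add: lborel_distr_uminus)
  also have "\<dots> = (\<integral>\<^sup>+y. f (- y) * indicator {0<..} y \<partial>lborel)"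
    by (subst nn_integral_distr) (auto intro!: nn_integral_cong split: split_indicator)
  finally show ?thesis .
qed

lemma linear_minus_exp_le:
  fixes s z :: real
  assumes "0 \<le> z"
  shows "s * z - exp z \<le> s\<^sup>2 / 2 - z"
proof -
  have "1 + z + z\<^sup>2 / 2 \<le> exp z" using assms by (rule exp_lower_Taylor_quadratic)
  moreover have "0 \<le> (z - s)\<^sup>2" by simp
  ultimately show ?thesis by (simp add: power2_eq_square algebra_simps)
qed

lemma nn_integral_exp_neg_exp_finite:
  fixes s :: real
  assumes "0 < s"
  shows "(\<integral>\<^sup>+y. ennreal (exp (- s * y - exp (- y))) \<partial>lborel) < \<infinity>"
proof -
  have "(\<integral>\<^sup>+y. ennreal (exp (- s * y - exp (- y))) * indicator {0..} y \<partial>lborel)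
      \<le> (\<integral>\<^sup>+y. ennreal (1 * exp (- s * y)) * indicator {0..} y \<partial>lborel)"
    by (intro nn_integral_mono) (auto split: split_indicator)
  also have "\<dots> < \<infinity>" using nn_integral_exp_atLeast_0[OF assms, of 1] by simp
  finally have pos: "(\<integral>\<^sup>+y. ennreal (exp (- s * y - exp (- y))) * indicator {0..} y \<partial>lborel) < \<infinity>" .
  have "(\<integral>\<^sup>+y. ennreal (exp (s * y - exp y)) * indicator {0<..} y \<partial>lborel)
      \<le> (\<integral>\<^sup>+y. ennreal (exp (s\<^sup>2 / 2) * exp (- 1 * y)) * indicator {0..} y \<partial>lborel)"
    using linear_minus_exp_le[of _ s]
    by (intro nn_integral_mono) (auto simp: exp_add[symmetric] split: split_indicator)
  also have "\<dots> < \<infinity>" using nn_integral_exp_atLeast_0[of 1 "exp (s\<^sup>2 / 2)"] by simp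
  finally have neg: "(\<integral>\<^sup>+y. ennreal (exp (s * y - exp y)) * indicator {0<..} y \<partial>lborel) < \<infinity>" .
  show ?thesis
    using pos neg by (subst nn_integral_lborel_split_at_0) auto
qed

definition lgi_measure :: "real \<Rightarrow> real measure" where
  "lgi_measure b = density lborel (\<lambda>y. ennreal (lgi_density b y))"

lemma borel_measurable_lgi_density [measurable]: "lgi_density b \<in> borel_measurable borel"
  unfolding lgi_density_def by measurable

lemma sets_lgi_measure [measurable_cong, simp]: "sets (lgi_measure b) = sets borel"
  by (simp add: lgi_measure_def)

lemma incr_law_eq_PiM: "incr_law N \<beta> = (\<Pi>\<^sub>M j\<in>{1..N}. lgi_measure (\<beta> j))"
  unfolding incr_law_def lgi_measure_def ..

lemma product_sigma_finite_lgi_measure: "product_sigma_finite (\<lambda>j. lgi_measure (\<beta> j))"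
  unfolding product_sigma_finite_def lgi_measure_def
  by (auto simp: sigma_finite_measure.sigma_finite_iff_density_finite[OF sigma_finite_lborel])

lemma sigma_finite_incr_law: "sigma_finite_measure (incr_law N \<beta>)"
proof -
  interpret product_sigma_finite "\<lambda>j. lgi_measure (\<beta> j)"
    by (rule product_sigma_finite_lgi_measure)
  show ?thesis unfolding incr_law_eq_PiM by (rule sigma_finite) simp
qed

text \<open>No positivity of \<open>b\<close> is needed: for \<open>Gamma b \<le> 0\<close> the density is truncated to \<open>0\<close>
  by \<open>ennreal\<close>.\<close>

lemma nn_integral_exp_lgi_measure_finite:
  fixes b c :: real
  assumes "c < b"
  shows "(\<integral>\<^sup>+y. ennreal (exp (c * y)) \<partial>lgi_measure b) < \<infinity>"
proof -
  have "(\<integral>\<^sup>+y. ennreal (exp (c * y)) \<partial>lgi_measure b)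
      = (\<integral>\<^sup>+y. ennreal (lgi_density b y) * ennreal (exp (c * y)) \<partial>lborel)"
    unfolding lgi_measure_def lgi_density_def by (subst nn_integral_density) auto
  also have "\<dots> = (\<integral>\<^sup>+y. ennreal (1 / Gamma b) * ennreal (exp (- (b - c) * y - exp (- y))) \<partial>lborel)"
  proof (intro nn_integral_cong)
    fix y
    have "lgi_density b y * exp (c * y) = 1 / Gamma b * exp (- (b - c) * y - exp (- y))"
      by (simp add: lgi_density_def mult_exp_exp algebra_simps)
    then show "ennreal (lgi_density b y) * ennreal (exp (c * y))
        = ennreal (1 / Gamma b) * ennreal (exp (- (b - c) * y - exp (- y)))"
      by (simp add: ennreal_mult''[symmetric])
  qed
  also have "\<dots> = ennreal (1 / Gamma b) * (\<integral>\<^sup>+y. ennreal (exp (- (b - c) * y - exp (- y))) \<partial>lborel)"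
    by (subst nn_integral_cmult) auto
  also have "\<dots> < \<infinity>"
    using nn_integral_exp_neg_exp_finite[of "b - c"] assms by (simp add: ennreal_mult_less_top)
  finally show ?thesis .
qed

lemma borel_measurable_linear_incr_law [measurable]:
  "(\<lambda>x. \<Sum>k\<in>{1..N}. a k * x k) \<in> borel_measurable (incr_law N \<beta>)"
  unfolding incr_law_eq_PiM by measurable

lemma nn_integral_exp_linear_incr_law_finite:
  assumes "\<And>k. k \<in> {1..N} \<Longrightarrow> a k < \<beta> k"
  shows "(\<integral>\<^sup>+x. ennreal (exp (\<Sum>k\<in>{1..N}. a k * x k)) \<partial>incr_law N \<beta>) < \<infinity>"
proof -
  interpret product_sigma_finite "\<lambda>j. lgi_measure (\<beta> j)"
    by (rule product_sigma_finite_lgi_measure)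
  have "(\<integral>\<^sup>+x. ennreal (exp (\<Sum>k\<in>{1..N}. a k * x k)) \<partial>incr_law N \<beta>)
      = (\<integral>\<^sup>+x. (\<Prod>k\<in>{1..N}. ennreal (exp (a k * x k))) \<partial>incr_law N \<beta>)"
    by (simp add: exp_sum prod_ennreal)
  also have "\<dots> = (\<Prod>k\<in>{1..N}. \<integral>\<^sup>+y. ennreal (exp (a k * y)) \<partial>lgi_measure (\<beta> k))"
    unfolding incr_law_eq_PiM by (subst product_nn_integral_prod) auto
  also have "\<dots> < \<infinity>"
  proof -
    have "\<forall>k\<in>{1..N}. (\<integral>\<^sup>+y. ennreal (exp (a k * y)) \<partial>lgi_measure (\<beta> k)) \<noteq> \<top>"
      using nn_integral_exp_lgi_measure_finite assms by (auto simp: less_top)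
    then show ?thesis by (simp add: less_top[symmetric] ennreal_prod_eq_top)
  qed
  finally show ?thesis .
qed

lemma nn_integral_pair_measure_mult:
  fixes f :: "'a \<Rightarrow> ennreal" and g :: "'b \<Rightarrow> ennreal"
  assumes "sigma_finite_measure M" "sigma_finite_measure M'"
    and [measurable]: "f \<in> borel_measurable M" "g \<in> borel_measurable M'"
  shows "(\<integral>\<^sup>+\<omega>. f (fst \<omega>) * g (snd \<omega>) \<partial>(M \<Otimes>\<^sub>M M')) = (\<integral>\<^sup>+x. f x \<partial>M) * (\<integral>\<^sup>+y. g y \<partial>M')"
proof -
  interpret pair_sigma_finite M M' using assms(1,2) by (rule pair_sigma_finite.intro)
  have "(\<integral>\<^sup>+\<omega>. f (fst \<omega>) * g (snd \<omega>) \<partial>(M \<Otimes>\<^sub>M M')) = (\<integral>\<^sup>+x. \<integral>\<^sup>+y. f x * g y \<partial>M' \<partial>M)"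
    by (subst M2.nn_integral_fst[symmetric]) auto
  also have "\<dots> = (\<integral>\<^sup>+x. f x * (\<integral>\<^sup>+y. g y \<partial>M') \<partial>M)"
    by (subst nn_integral_cmult) auto
  finally show ?thesis by (simp add: nn_integral_multc)
qed

definition incr_form :: "nat \<Rightarrow> (nat \<Rightarrow> real) \<Rightarrow> (nat \<Rightarrow> real) \<Rightarrow> (nat \<Rightarrow> real) \<times> (nat \<Rightarrow> real) \<Rightarrow> real"
  where "incr_form N a b \<omega> = (\<Sum>k\<in>{1..N}. a k * fst \<omega> k + b k * snd \<omega> k)"

lemma borel_measurable_exp_incr_form [measurable]:
  "(\<lambda>\<omega>. ennreal (exp (incr_form N a b \<omega>))) \<in> borel_measurable (LGRW N \<beta>)"
  unfolding incr_form_def LGRW_def sum.distrib by measurable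

lemma nn_integral_exp_incr_form_finite:
  assumes "\<And>k. k \<in> {1..N} \<Longrightarrow> a k < \<beta> k" "\<And>k. k \<in> {1..N} \<Longrightarrow> b k < \<beta> k"
  shows "(\<integral>\<^sup>+\<omega>. ennreal (exp (incr_form N a b \<omega>)) \<partial>LGRW N \<beta>) < \<infinity>"
proof -
  have factor: "ennreal (exp (incr_form N a b \<omega>))
      = ennreal (exp (\<Sum>k\<in>{1..N}. a k * fst \<omega> k)) * ennreal (exp (\<Sum>k\<in>{1..N}. b k * snd \<omega> k))" for \<omega>
    by (simp add: incr_form_def sum.distrib exp_add ennreal_mult)
  have "(\<integral>\<^sup>+\<omega>. ennreal (exp (incr_form N a b \<omega>)) \<partial>LGRW N \<beta>)
      = (\<integral>\<^sup>+x. ennreal (exp (\<Sum>k\<in>{1..N}. a k * x k)) \<partial>incr_law N \<beta>)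
        * (\<integral>\<^sup>+y. ennreal (exp (\<Sum>k\<in>{1..N}. b k * y k)) \<partial>incr_law N \<beta>)"
    unfolding LGRW_def factor
    by (rule nn_integral_pair_measure_mult[where f = "\<lambda>x. ennreal (exp (\<Sum>k\<in>{1..N}. a k * x k))"
          and g = "\<lambda>y. ennreal (exp (\<Sum>k\<in>{1..N}. b k * y k))",
          OF sigma_finite_incr_law sigma_finite_incr_law]; measurable)
  also have "\<dots> < \<infinity>"
    using nn_integral_exp_linear_incr_law_finite assms by (simp add: ennreal_mult_less_top)
  finally show ?thesis .
qed

lemma incr_form_convex_combination:
  "(1 - t) * incr_form N a b \<omega> + t * incr_form N a' b' \<omega>
    = incr_form N (\<lambda>k. (1 - t) * a k + t * a' k) (\<lambda>k. (1 - t) * b k + t * b' k) \<omega>"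
  by (simp add: incr_form_def sum_distrib_left sum.distrib[symmetric] algebra_simps)

lemma incr_form_cong:
  assumes "\<And>k. k \<in> {1..N} \<Longrightarrow> a k = a' k" "\<And>k. k \<in> {1..N} \<Longrightarrow> b k = b' k"
  shows "incr_form N a b \<omega> = incr_form N a' b' \<omega>"
  using assms by (auto simp: incr_form_def intro!: sum.cong)

lemma walk_eq_sum_upto:
  assumes "j \<le> N"
  shows "walk x j = (\<Sum>k\<in>{1..N}. of_bool (k \<le> j) * x k)"
proof -
  have "(\<Sum>k\<in>{1..N}. of_bool (k \<le> j) * x k) = (\<Sum>k\<in>{1..N}. if k \<in> {..j} then x k else 0)"
    by (intro sum.cong) auto
  also have "\<dots> = sum x ({1..N} \<inter> {..j})"
    by (simp only: sum.inter_restrict finite_atLeastAtMost)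
  also have "{1..N} \<inter> {..j} = {1..j}"
    using assms by auto
  finally show ?thesis by (simp add: walk_def)
qed

lemma walk_gap_eq_incr_form:
  assumes "m \<in> {1..N}"
  shows "- p * (walk (snd \<omega>) m - walk (fst \<omega>) (m - 1)) - v * (walk (fst \<omega>) N - walk (snd \<omega>) N)
    = incr_form N (\<lambda>k. p * of_bool (k < m) - v) (\<lambda>k. v - p * of_bool (k \<le> m)) \<omega>"
proof -
  have "incr_form N (\<lambda>k. p * of_bool (k < m) - v) (\<lambda>k. v - p * of_bool (k \<le> m)) \<omega>
      = p * (\<Sum>k\<in>{1..N}. of_bool (k \<le> m - 1) * fst \<omega> k) - p * (\<Sum>k\<in>{1..N}. of_bool (k \<le> m) * snd \<omega> k)
        - v * (\<Sum>k\<in>{1..N}. of_bool (k \<le> N) * fst \<omega> k) + v * (\<Sum>k\<in>{1..N}. of_bool (k \<le> N) * snd \<omega> k)"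
    unfolding incr_form_def sum_distrib_left sum_subtractf[symmetric] sum.distrib[symmetric]
    using assms by (intro sum.cong) (auto simp: algebra_simps)
  also have "\<dots> = - p * (walk (snd \<omega>) m - walk (fst \<omega>) (m - 1)) - v * (walk (fst \<omega>) N - walk (snd \<omega>) N)"
  proof -
    have "m \<le> N" "m - 1 \<le> N" using assms by auto
    then show ?thesis
      by (simp only: walk_eq_sum_upto[of m N] walk_eq_sum_upto[of "m - 1" N] walk_eq_sum_upto[of N N])
        (simp add: algebra_simps)
  qed
  finally show ?thesis ..
qed

lemma sum_exp_powr_neg_le:
  fixes A :: "'a \<Rightarrow> real" and p t :: real
  assumes "finite I" "i \<in> I" "j \<in> I" "0 \<le> t" "t \<le> 1" "0 \<le> p"
  shows "(\<Sum>k\<in>I. exp (A k)) powr (- p) \<le> exp (- p * ((1 - t) * A i + t * A j))"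
proof -
  let ?S = "\<Sum>k\<in>I. exp (A k)"
  have S_pos: "0 < ?S" using assms(1,2) by (intro sum_pos2[of _ i]) auto
  have "A k \<le> ln ?S" if "k \<in> I" for k
    using member_le_sum[of k I "\<lambda>k. exp (A k)"] that assms(1) S_pos by (simp add: ln_ge_iff)
  then have "(1 - t) * A i + t * A j \<le> (1 - t) * ln ?S + t * ln ?S"
    using assms by (intro add_mono mult_left_mono) auto
  then have "(1 - t) * A i + t * A j \<le> ln ?S" by (simp add: algebra_simps)
  then have "- p * ln ?S \<le> - p * ((1 - t) * A i + t * A j)"
    using assms(6) by (simp add: mult_left_mono)
  then show ?thesis using S_pos by (simp add: powr_def)
qed

lemma sum_exp_powr_le:
  fixes A :: "'a \<Rightarrow> real" and p :: real
  assumes "finite I" "I \<noteq> {}" "0 \<le> p"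
  shows "(\<Sum>k\<in>I. exp (A k)) powr p \<le> real (card I) powr p * (\<Sum>k\<in>I. exp (p * A k))"
proof -
  have fin: "finite (A ` I)" "A ` I \<noteq> {}" using assms(1,2) by auto
  obtain m where m: "m \<in> I" "A m = Max (A ` I)" using Max_in[OF fin] by auto
  have max: "A k \<le> A m" if "k \<in> I" for k using Max_ge[OF fin(1)] m(2) that by simp
  have "(\<Sum>k\<in>I. exp (A k)) \<le> (\<Sum>k\<in>I. exp (A m))"
    using max by (intro sum_mono) simp
  then have "(\<Sum>k\<in>I. exp (A k)) powr p \<le> (real (card I) * exp (A m)) powr p"
    using assms(3) by (intro powr_mono2) (auto intro: sum_nonneg)
  also have "\<dots> = real (card I) powr p * exp (p * A m)"
    by (simp add: powr_mult exp_powr_real mult.commute)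
  also have "\<dots> \<le> real (card I) powr p * (\<Sum>k\<in>I. exp (p * A k))"
    using m assms(1) by (intro mult_left_mono member_le_sum) auto
  finally show ?thesis .
qed

lemma obtain_weight_abs_less:
  fixes u v :: real
  assumes "0 < u + v"
    and "\<And>k. k \<in> K \<Longrightarrow> 0 < \<beta> k" "\<And>k. k \<in> K \<Longrightarrow> 0 < \<beta> k + u" "\<And>k. k \<in> K \<Longrightarrow> 0 < \<beta> k + v"
  obtains t where "0 \<le> t" "t \<le> 1" "\<forall>k\<in>K. \<bar>(u + v) * t - v\<bar> < \<beta> k"
proof -
  consider "v < 0" | "u < 0" | "0 \<le> u" "0 \<le> v" by linarith
  then show ?thesis
  proof cases
    case 1
    then show ?thesis by (intro that[of 0]) (auto dest: assms(4))
  next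
    case 2
    then show ?thesis by (intro that[of 1]) (auto dest: assms(3))
  next
    case 3
    then show ?thesis using assms(1) by (intro that[of "v / (u + v)"]) (auto dest: assms(2))
  qed
qed

lemma V_walk_le_exp_incr_form:
  assumes "1 \<le> N" "0 \<le> t" "t \<le> 1" "0 \<le> u + v"
  shows "V N u v (walk (fst \<omega>)) (walk (snd \<omega>))
    \<le> exp (incr_form N (\<lambda>k. (u + v) * t * of_bool (k < N) - v)
                        (\<lambda>k. v - (u + v) * ((1 - t) * of_bool (k \<le> 1) + t)) \<omega>)"
proof -
  define gap where "gap j = walk (snd \<omega>) j - walk (fst \<omega>) (j - 1)" for j
  define D where "D = walk (fst \<omega>) N - walk (snd \<omega>) N"
  have exponent: "- (u + v) * gap m - v * D
      = incr_form N (\<lambda>k. (u + v) * of_bool (k < m) - v) (\<lambda>k. v - (u + v) * of_bool (k \<le> m)) \<omega>"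
    if "m \<in> {1..N}" for m
    unfolding gap_def D_def using that by (rule walk_gap_eq_incr_form)
  have "V N u v (walk (fst \<omega>)) (walk (snd \<omega>)) = (\<Sum>j\<in>{1..N}. exp (gap j)) powr (- (u + v)) * exp (- v * D)"
    by (simp add: V_def gap_def D_def)
  also have "\<dots> \<le> exp (- (u + v) * ((1 - t) * gap 1 + t * gap N)) * exp (- v * D)"
    using assms by (intro mult_right_mono sum_exp_powr_neg_le) auto
  also have "\<dots> = exp ((1 - t) * (- (u + v) * gap 1 - v * D) + t * (- (u + v) * gap N - v * D))"
    by (simp add: mult_exp_exp algebra_simps)
  also have "(1 - t) * (- (u + v) * gap 1 - v * D) + t * (- (u + v) * gap N - v * D)
    = incr_form N (\<lambda>k. (u + v) * t * of_bool (k < N) - v)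
                  (\<lambda>k. v - (u + v) * ((1 - t) * of_bool (k \<le> 1) + t)) \<omega>"
    using assms(1)
    by (simp only: exponent atLeastAtMost_iff order_refl incr_form_convex_combination)
      (rule incr_form_cong; auto simp: algebra_simps)
  finally show ?thesis .
qed

lemma V_walk_le_sum_exp_incr_form:
  assumes "1 \<le> N" "u + v \<le> 0"
  shows "V N u v (walk (fst \<omega>)) (walk (snd \<omega>))
    \<le> real N powr (- (u + v)) * (\<Sum>m\<in>{1..N}.
          exp (incr_form N (\<lambda>k. (u + v) * of_bool (k < m) - v) (\<lambda>k. v - (u + v) * of_bool (k \<le> m)) \<omega>))"
proof -
  define gap where "gap j = walk (snd \<omega>) j - walk (fst \<omega>) (j - 1)" for j
  define D where "D = walk (fst \<omega>) N - walk (snd \<omega>) N"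
  have "V N u v (walk (fst \<omega>)) (walk (snd \<omega>)) = (\<Sum>j\<in>{1..N}. exp (gap j)) powr (- (u + v)) * exp (- v * D)"
    by (simp add: V_def gap_def D_def)
  also have "\<dots> \<le> real N powr (- (u + v)) * (\<Sum>m\<in>{1..N}. exp (- (u + v) * gap m)) * exp (- v * D)"
    using assms sum_exp_powr_le[of "{1..N}" "- (u + v)" gap] by (intro mult_right_mono) auto
  also have "\<dots> = real N powr (- (u + v)) * (\<Sum>m\<in>{1..N}. exp (- (u + v) * gap m - v * D))"
    by (simp add: sum_distrib_right mult_exp_exp)
  also have "\<dots> = real N powr (- (u + v)) * (\<Sum>m\<in>{1..N}.
          exp (incr_form N (\<lambda>k. (u + v) * of_bool (k < m) - v) (\<lambda>k. v - (u + v) * of_bool (k \<le> m)) \<omega>))"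
    unfolding gap_def D_def by (simp only: walk_gap_eq_incr_form cong: sum.cong)
  finally show ?thesis .
qed

lemma nn_integral_V_finite_of_pos:
  assumes "1 \<le> N" "0 < u + v"
    and "\<And>i. i \<in> {1..N} \<Longrightarrow> \<beta> i > 0"
    and "\<And>i. i \<in> {1..N} \<Longrightarrow> \<beta> i + u > 0"
    and "\<And>i. i \<in> {1..N} \<Longrightarrow> \<beta> i + v > 0"
  shows "(\<integral>\<^sup>+ \<omega>. ennreal (V N u v (walk (fst \<omega>)) (walk (snd \<omega>))) \<partial>LGRW N \<beta>) < \<infinity>"
proof -
  obtain t where t: "0 \<le> t" "t \<le> 1" "\<forall>k\<in>{1..N}. \<bar>(u + v) * t - v\<bar> < \<beta> k"
    by (rule obtain_weight_abs_less[OF assms(2-5)])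
  let ?a = "\<lambda>k. (u + v) * t * of_bool (k < N) - v"
  let ?b = "\<lambda>k. v - (u + v) * ((1 - t) * of_bool (k \<le> 1) + t)"
  have "(\<integral>\<^sup>+ \<omega>. ennreal (V N u v (walk (fst \<omega>)) (walk (snd \<omega>))) \<partial>LGRW N \<beta>)
      \<le> (\<integral>\<^sup>+ \<omega>. ennreal (exp (incr_form N ?a ?b \<omega>)) \<partial>LGRW N \<beta>)"
    using assms(1,2) t by (intro nn_integral_mono ennreal_leI V_walk_le_exp_incr_form) auto
  also have "\<dots> < \<infinity>"
  proof (rule nn_integral_exp_incr_form_finite)
    fix k assume k: "k \<in> {1..N}"
    show "?a k < \<beta> k"
      using t(3) k assms(5)[OF k] by (cases "k < N") (auto simp: abs_less_iff)
    show "?b k < \<beta> k"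
      using t(3) k assms(4)[OF k] by (cases "k \<le> 1") (auto simp: abs_less_iff algebra_simps)
  qed
  finally show ?thesis .
qed

lemma nn_integral_V_finite_of_nonpos:
  assumes "1 \<le> N" "u + v \<le> 0"
    and "\<And>i. i \<in> {1..N} \<Longrightarrow> \<beta> i + u > 0"
    and "\<And>i. i \<in> {1..N} \<Longrightarrow> \<beta> i + v > 0"
  shows "(\<integral>\<^sup>+ \<omega>. ennreal (V N u v (walk (fst \<omega>)) (walk (snd \<omega>))) \<partial>LGRW N \<beta>) < \<infinity>"
proof -
  let ?a = "\<lambda>m k. (u + v) * of_bool (k < m) - v"
  let ?b = "\<lambda>m k. v - (u + v) * of_bool (k \<le> m)"
  have finite: "(\<integral>\<^sup>+ \<omega>. ennreal (exp (incr_form N (?a m) (?b m) \<omega>)) \<partial>LGRW N \<beta>) < \<infinity>" for m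
  proof (rule nn_integral_exp_incr_form_finite)
    fix k assume k: "k \<in> {1..N}"
    show "?a m k < \<beta> k"
      using assms(2) assms(3,4)[OF k] by (cases "k < m") auto
    show "?b m k < \<beta> k"
      using assms(2) assms(3,4)[OF k] by (cases "k \<le> m") auto
  qed
  have "(\<integral>\<^sup>+ \<omega>. ennreal (V N u v (walk (fst \<omega>)) (walk (snd \<omega>))) \<partial>LGRW N \<beta>)
      \<le> (\<integral>\<^sup>+ \<omega>. ennreal (real N powr (- (u + v))) * (\<Sum>m\<in>{1..N}. ennreal (exp (incr_form N (?a m) (?b m) \<omega>))) \<partial>LGRW N \<beta>)"
  proof (rule nn_integral_mono)
    fix \<omega>
    show "ennreal (V N u v (walk (fst \<omega>)) (walk (snd \<omega>)))
        \<le> ennreal (real N powr (- (u + v))) * (\<Sum>m\<in>{1..N}. ennreal (exp (incr_form N (?a m) (?b m) \<omega>)))"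
      using V_walk_le_sum_exp_incr_form[OF assms(1,2), of \<omega>]
      by (simp add: sum_ennreal ennreal_mult[symmetric] sum_nonneg ennreal_leI)
  qed
  also have "\<dots> = ennreal (real N powr (- (u + v)))
      * (\<integral>\<^sup>+ \<omega>. (\<Sum>m\<in>{1..N}. ennreal (exp (incr_form N (?a m) (?b m) \<omega>))) \<partial>LGRW N \<beta>)"
    by (rule nn_integral_cmult) measurable
  also have "\<dots> = ennreal (real N powr (- (u + v)))
      * (\<Sum>m\<in>{1..N}. \<integral>\<^sup>+ \<omega>. ennreal (exp (incr_form N (?a m) (?b m) \<omega>)) \<partial>LGRW N \<beta>)"
    by (subst nn_integral_sum) (simp_all only: borel_measurable_exp_incr_form)
  also have "\<dots> < \<infinity>"
    using finite by (simp add: ennreal_mult_less_top)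
  finally show ?thesis .
qed

theorem proposition3p15:
  fixes N :: nat and \<beta> :: "nat \<Rightarrow> real" and u v :: real
  assumes "\<And>i. i \<in> {1..N} \<Longrightarrow> \<beta> i > 0"
      and "\<And>i. i \<in> {1..N} \<Longrightarrow> \<beta> i + u > 0"
      and "\<And>i. i \<in> {1..N} \<Longrightarrow> \<beta> i + v > 0"
  shows "(\<integral>\<^sup>+ \<omega>. ennreal (V N u v (walk (fst \<omega>)) (walk (snd \<omega>))) \<partial>LGRW N \<beta>) < \<infinity>"
proof (cases "N = 0")
  case True
  then show ?thesis by (simp add: V_def)
next
  case False
  then have "1 \<le> N" by simp
  show ?thesis
  proof (cases "0 < u + v")
    case True
    show ?thesis using \<open>1 \<le> N\<close> True assms by (rule nn_integral_V_finite_of_pos)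
  next
    case False
    show ?thesis using \<open>1 \<le> N\<close> False assms(2,3) by (intro nn_integral_V_finite_of_nonpos) auto
  qed
qed

end
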